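(* Fix any enumeration $(\mathtt C_n[-])_{n\in\mathbb N}$ of all contexts of the untyped $\lambda$-calculus, and define on the set $\Lambda$ of $\lambda$-terms $$p_{\mathrm{ctx}}(M,N)=\sum\Big\{\tfrac{1}{2^n}\ \Big|\ n\in\mathbb N,\ \mathtt C_n[M]\text{ is unsolvable or }\mathtt C_n[N]\text{ is unsolvable}\Big\}.$$ Then $p_{\mathrm{ctx}}$ is a sensible extensional $\lambda$-PPM.
   Context: A context $\mathtt C[-]$ is a $\lambda$-term with one hole; $\mathtt C[M]$ is the result of filling the hole with $M$. A $\lambda$-term is solvable if it has a head normal form (standard notion). A partial pseudo-metric (PPM) on a set $X$ is a map $p:X\times X\to[0,+\infty]$ satisfying, for all $x,y,z$: $p(x,x)\leq p(x,y)$; $p(x,y)=p(y,x)$; $p(x,y)\leq p(x,z)+p(z,y)-p(z,z)$. It induces the preorder $x\leq_p y$ iff $p(x,y)\leq p(x,x)$, and the equivalence $x\simeq_p y$ iff $x\leq_p y$ and $y\leq_p x$. Open balls are $B^p_\epsilon(x)=\{y\mid p(y,x)<p(x,x)+\epsilon\}$ ($\epsilon>0$), and the topology $\mathcal O_p(X)$ consists of all unions of open balls; a map $f:X\to X$ is $p$-continuous if it is continuous for $\mathcal O_p(X)$. A $\lambda$-theory is an equivalence relation $\simeq$ on $\Lambda$ such that $M\simeq N$ implies $MP\simeq NP$, $PM\simeq PN$ and $\lambda x.M\simeq\lambda x.N$, and $(\lambda x.M)N\simeq M[N/x]$ always holds; it is extensional if moreover $M\simeq\lambda x.Mx$ (for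 $x$ not free in $M$). A $\lambda$-PPM (resp. extensional $\lambda$-PPM) is a PPM $p$ on $\Lambda$ such that $\simeq_p$ is a $\lambda$-theory (resp. an extensional $\lambda$-theory) and, for every context $\mathtt C[-]$, the map $M\mapsto\mathtt C[M]$ is $p$-continuous. A $\lambda$-PPM $p$ is sensible if every unsolvable term $M$ is generic for $p$ (i.e. $M\leq_p N$ for all $N\in\Lambda$) while no solvable term is generic for $p$. *)

theory Defs
  imports Complex_Main "HOL-Library.Extended_Nonnegative_Real"
begin

section \<open>Untyped lambda-terms (de Bruijn indices, i.e. terms up to alpha-equivalence)\<close>

datatype lterm = Var nat | App lterm lterm | Abs lterm

primrec lift :: "lterm \<Rightarrow> nat \<Rightarrow> lterm" where
  "lift (Var i) k = (if i < k then Var i else Var (i + 1))"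
| "lift (App s t) k = App (lift s k) (lift t k)"
| "lift (Abs s) k = Abs (lift s (k + 1))"

primrec subst :: "lterm \<Rightarrow> lterm \<Rightarrow> nat \<Rightarrow> lterm" where
  "subst (Var i) t k = (if k < i then Var (i - 1) else if i = k then t else Var i)"
| "subst (App s u) t k = App (subst s t k) (subst u t k)"
| "subst (Abs s) t k = Abs (subst s (lift t 0) (k + 1))"

inductive beta :: "lterm \<Rightarrow> lterm \<Rightarrow> bool" where
  beta_rule: "beta (App (Abs s) t) (subst s t 0)"
| appL: "beta s t \<Longrightarrow> beta (App s u) (App t u)"
| appR: "beta s t \<Longrightarrow> beta (App u s) (App u t)"
| abs: "beta s t \<Longrightarrow> beta (Abs s) (Abs t)"

definition beta_conv :: "lterm \<Rightarrow> lterm \<Rightarrow> bool" where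
  "beta_conv = (sup beta beta\<inverse>\<inverse>)\<^sup>*\<^sup>*"

inductive head_var_app :: "lterm \<Rightarrow> bool" where
  "head_var_app (Var i)"
| "head_var_app M \<Longrightarrow> head_var_app (App M N)"

inductive hnf :: "lterm \<Rightarrow> bool" where
  "head_var_app M \<Longrightarrow> hnf M"
| "hnf M \<Longrightarrow> hnf (Abs M)"

definition solvable :: "lterm \<Rightarrow> bool" where
  "solvable M \<longleftrightarrow> (\<exists>N. beta_conv M N \<and> hnf N)"

datatype ctx = Hole | CAppL ctx lterm | CAppR lterm ctx | CAbs ctx

primrec plug :: "ctx \<Rightarrow> lterm \<Rightarrow> lterm" where
  "plug Hole M = M"
| "plug (CAppL C N) M = App (plug C M) N"
| "plug (CAppR N C) M = App N (plug C M)"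
| "plug (CAbs C) M = Abs (plug C M)"

definition ppm :: "('a \<Rightarrow> 'a \<Rightarrow> ennreal) \<Rightarrow> bool" where
  "ppm p \<longleftrightarrow>
     (\<forall>x y. p x x \<le> p x y) \<and>
     (\<forall>x y. p x y = p y x) \<and>
     (\<forall>x y z. p x y + p z z \<le> p x z + p z y)"

definition ppm_le :: "('a \<Rightarrow> 'a \<Rightarrow> ennreal) \<Rightarrow> 'a \<Rightarrow> 'a \<Rightarrow> bool" where
  "ppm_le p x y \<longleftrightarrow> p x y \<le> p x x"

definition ppm_eq :: "('a \<Rightarrow> 'a \<Rightarrow> ennreal) \<Rightarrow> 'a \<Rightarrow> 'a \<Rightarrow> bool" where
  "ppm_eq p x y \<longleftrightarrow> ppm_le p x y \<and> ppm_le p y x"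

definition ppm_ball :: "('a \<Rightarrow> 'a \<Rightarrow> ennreal) \<Rightarrow> real \<Rightarrow> 'a \<Rightarrow> 'a set" where
  "ppm_ball p \<epsilon> x = {y. p y x < p x x + ennreal \<epsilon>}"

definition ppm_open :: "('a \<Rightarrow> 'a \<Rightarrow> ennreal) \<Rightarrow> 'a set \<Rightarrow> bool" where
  "ppm_open p U \<longleftrightarrow>
     (\<exists>F. (\<forall>B\<in>F. \<exists>x \<epsilon>. \<epsilon> > 0 \<and> B = ppm_ball p \<epsilon> x) \<and> U = \<Union>F)"

definition ppm_continuous :: "('a \<Rightarrow> 'a \<Rightarrow> ennreal) \<Rightarrow> ('a \<Rightarrow> 'a) \<Rightarrow> bool" where
  "ppm_continuous p f \<longleftrightarrow> (\<forall>U. ppm_open p U \<longrightarrow> ppm_open p (f -` U))"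

definition lambda_theory :: "(lterm \<Rightarrow> lterm \<Rightarrow> bool) \<Rightarrow> bool" where
  "lambda_theory E \<longleftrightarrow>
     equivp E \<and>
     (\<forall>M N P. E M N \<longrightarrow> E (App M P) (App N P)) \<and>
     (\<forall>M N P. E M N \<longrightarrow> E (App P M) (App P N)) \<and>
     (\<forall>M N. E M N \<longrightarrow> E (Abs M) (Abs N)) \<and>
     (\<forall>M N. E (App (Abs M) N) (subst M N 0))"

text \<open>Eta: M \<simeq> \<lambda>x. M x with x not free in M (in de Bruijn: lift M 0).\<close>
definition ext_lambda_theory :: "(lterm \<Rightarrow> lterm \<Rightarrow> bool) \<Rightarrow> bool" where
  "ext_lambda_theory E \<longleftrightarrow>
     lambda_theory E \<and> (\<forall>M. E M (Abs (App (lift M 0) (Var 0))))"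

definition lambda_ppm :: "(lterm \<Rightarrow> lterm \<Rightarrow> ennreal) \<Rightarrow> bool" where
  "lambda_ppm p \<longleftrightarrow>
     ppm p \<and> lambda_theory (ppm_eq p) \<and> (\<forall>C. ppm_continuous p (plug C))"

definition ext_lambda_ppm :: "(lterm \<Rightarrow> lterm \<Rightarrow> ennreal) \<Rightarrow> bool" where
  "ext_lambda_ppm p \<longleftrightarrow>
     ppm p \<and> ext_lambda_theory (ppm_eq p) \<and> (\<forall>C. ppm_continuous p (plug C))"

definition generic :: "(lterm \<Rightarrow> lterm \<Rightarrow> ennreal) \<Rightarrow> lterm \<Rightarrow> bool" where
  "generic p M \<longleftrightarrow> (\<forall>N. ppm_le p M N)"

definition sensible :: "(lterm \<Rightarrow> lterm \<Rightarrow> ennreal) \<Rightarrow> bool" where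
  "sensible p \<longleftrightarrow>
     lambda_ppm p \<and>
     (\<forall>M. \<not> solvable M \<longrightarrow> generic p M) \<and>
     (\<forall>M. solvable M \<longrightarrow> \<not> generic p M)"

definition p_ctx :: "(nat \<Rightarrow> ctx) \<Rightarrow> lterm \<Rightarrow> lterm \<Rightarrow> ennreal" where
  "p_ctx C M N =
     (\<Sum>n. if \<not> solvable (plug (C n) M) \<or> \<not> solvable (plug (C n) N)
          then ennreal (1 / 2 ^ n) else 0)"

end

theory Submission
  imports Defs
begin

text \<open>The value p_ctx C M N is the weight of a union U M \<union> U N, where U M is the set of
  indices of contexts in which M is unsolvable. Every such union weight is a partial
  pseudo-metric whose preorder is reverse inclusion of the sets U, so for an enumeration of all
  contexts M \<simeq> N says that M and N are solvable in the same contexts: this is the theory H*.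
  Plugging into a fixed context D merely reindexes the enumeration, which makes D[-] continuous.
  H* is a lambda-theory because solvability, characterised as head normalisation, is invariant
  under beta-conversion (Takahashi's parallel reduction); it is extensional because
  eta-expanding subterms preserves solvability in both directions. Sensibility is the genericity
  lemma, replacing unsolvable subterms preserves solvability, together with the unsolvability
  of Omega in the empty context.\<close>

lemma lift_lift:
  "i \<le> k \<Longrightarrow> lift (lift t i) (Suc k) = lift (lift t k) i"
  by (induct t arbitrary: i k) auto

lemma lift_subst [simp]:
  "j \<le> i \<Longrightarrow> lift (subst t s j) i = subst (lift t (Suc i)) (lift s i) j"
  by (induct t arbitrary: i j s) (simp_all add: diff_Suc lift_lift split: nat.split)

lemma lift_subst_lt:
  "i \<le> j \<Longrightarrow> lift (subst t s j) i = subst (lift t i) (lift s i) (Suc j)"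
  by (induct t arbitrary: i j s) (auto simp: lift_lift)

lemma subst_lift [simp]: "subst (lift t k) s k = t"
  by (induct t arbitrary: k s) simp_all

lemma subst_lift_Var [simp]: "subst (lift t (Suc k)) (Var k) k = t"
  by (induct t arbitrary: k) auto

lemma subst_subst:
  "i \<le> j \<Longrightarrow> subst (subst t (lift v i) (Suc j)) (subst u v j) i = subst (subst t u i) v j"
  by (induct t arbitrary: i j u v)
    (simp_all add: diff_Suc lift_lift [symmetric] lift_subst_lt split: nat.split)

lemma rtranclp_map:
  assumes "\<And>x y. r x y \<Longrightarrow> s (f x) (f y)" and "r\<^sup>*\<^sup>* x y"
  shows "s\<^sup>*\<^sup>* (f x) (f y)"
  using assms(2) by induct (auto intro: rtranclp.rtrancl_into_rtrancl assms(1))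

lemma beta_lift: "beta s t \<Longrightarrow> beta (lift s k) (lift t k)"
proof (induct arbitrary: k rule: beta.induct)
  case (beta_rule s t)
  have "beta (App (Abs (lift s (Suc k))) (lift t k)) (subst (lift s (Suc k)) (lift t k) 0)"
    by (rule beta.beta_rule)
  then show ?case by simp
qed (auto intro: beta.intros)

lemma betas_AppL: "beta\<^sup>*\<^sup>* s t \<Longrightarrow> beta\<^sup>*\<^sup>* (App s u) (App t u)"
  by (rule rtranclp_map[where f = "\<lambda>s. App s u"]) (rule beta.appL)

lemma betas_Abs: "beta\<^sup>*\<^sup>* s t \<Longrightarrow> beta\<^sup>*\<^sup>* (Abs s) (Abs t)"
  by (rule rtranclp_map[where f = Abs]) (rule beta.abs)

lemma betas_lift: "beta\<^sup>*\<^sup>* s t \<Longrightarrow> beta\<^sup>*\<^sup>* (lift s k) (lift t k)"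
  by (rule rtranclp_map[where f = "\<lambda>s. lift s k"]) (rule beta_lift)

lemma beta_plug: "beta M N \<Longrightarrow> beta (plug D M) (plug D N)"
  by (induct D) (auto intro: beta.intros)

lemma beta_conv_eq: "beta_conv = (symclp beta)\<^sup>*\<^sup>*"
  by (simp add: beta_conv_def symclp_pointfree)

lemma equivp_beta_conv: "equivp beta_conv"
  by (simp add: beta_conv_eq equivp_rtranclp_symclp)

lemma betas_imp_beta_conv: "beta\<^sup>*\<^sup>* M N \<Longrightarrow> beta_conv M N"
  unfolding beta_conv_eq by (rule rtranclp_map[where f = "\<lambda>x. x"]) (rule symclpI1)

lemma beta_conv_solvable_iff: "beta_conv M N \<Longrightarrow> solvable M \<longleftrightarrow> solvable N"
  unfolding solvable_def
  by (meson equivp_beta_conv equivp_symp equivp_transp)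

lemma betas_solvable_iff: "beta\<^sup>*\<^sup>* M N \<Longrightarrow> solvable M \<longleftrightarrow> solvable N"
  by (rule beta_conv_solvable_iff[OF betas_imp_beta_conv])

inductive par :: "lterm \<Rightarrow> lterm \<Rightarrow> bool" where
  par_Var: "par (Var i) (Var i)"
| par_App: "par s s' \<Longrightarrow> par t t' \<Longrightarrow> par (App s t) (App s' t')"
| par_Abs: "par s s' \<Longrightarrow> par (Abs s) (Abs s')"
| par_beta: "par s s' \<Longrightarrow> par t t' \<Longrightarrow> par (App (Abs s) t) (subst s' t' 0)"

lemma par_refl [simp, intro]: "par t t"
  by (induct t) (auto intro: par.intros)

lemma par_lift: "par s t \<Longrightarrow> par (lift s k) (lift t k)"
proof (induct arbitrary: k rule: par.induct)
  case (par_beta s s' t t')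
  then have "par (App (Abs (lift s (Suc k))) (lift t k)) (subst (lift s' (Suc k)) (lift t' k) 0)"
    by (auto intro: par.par_beta)
  then show ?case by simp
qed (auto intro: par.intros)

lemma par_subst: "par s s' \<Longrightarrow> par t t' \<Longrightarrow> par (subst s t k) (subst s' t' k)"
proof (induct arbitrary: t t' k rule: par.induct)
  case (par_beta s s' u u')
  have "par (App (Abs (subst s (lift t 0) (Suc k))) (subst u t k))
     (subst (subst s' (lift t' 0) (Suc k)) (subst u' t' k) 0)"
    using par_beta by (intro par.par_beta) (auto intro: par_lift)
  then show ?case using subst_subst[of 0 k s' t' u'] by simp
next
  case (par_Abs s s')
  then show ?case by (simp add: par.par_Abs par_lift)
qed (auto intro: par.intros)

lemma beta_imp_par: "beta s t \<Longrightarrow> par s t"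
  by (induct rule: beta.induct) (auto intro: par.intros)

inductive wh :: "lterm \<Rightarrow> lterm \<Rightarrow> bool" where
  wh_beta: "wh (App (Abs s) t) (subst s t 0)"
| wh_App: "wh s s' \<Longrightarrow> wh (App s t) (App s' t)"

lemma wh_imp_beta: "wh s t \<Longrightarrow> beta s t"
  by (induct rule: wh.induct) (auto intro: beta.intros)

lemma wh_subst: "wh s s' \<Longrightarrow> wh (subst s t k) (subst s' t k)"
proof (induct arbitrary: k rule: wh.induct)
  case (wh_beta s u)
  have "wh (App (Abs (subst s (lift t 0) (Suc k))) (subst u t k))
     (subst (subst s (lift t 0) (Suc k)) (subst u t k) 0)" by (rule wh.wh_beta)
  then show ?case using subst_subst[of 0 k s t u] by simp
qed (auto intro: wh.intros)

lemma wh_lift: "wh s s' \<Longrightarrow> wh (lift s k) (lift s' k)"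
proof (induct arbitrary: k rule: wh.induct)
  case (wh_beta s u)
  have "wh (App (Abs (lift s (Suc k))) (lift u k)) (subst (lift s (Suc k)) (lift u k) 0)"
    by (rule wh.wh_beta)
  then show ?case by simp
qed (auto intro: wh.intros)

lemma whs_subst: "wh\<^sup>*\<^sup>* s s' \<Longrightarrow> wh\<^sup>*\<^sup>* (subst s t k) (subst s' t k)"
  by (rule rtranclp_map[where f = "\<lambda>s. subst s t k"]) (rule wh_subst)

lemma whs_App: "wh\<^sup>*\<^sup>* s s' \<Longrightarrow> wh\<^sup>*\<^sup>* (App s t) (App s' t)"
  by (rule rtranclp_map[where f = "\<lambda>s. App s t"]) (rule wh.wh_App)

text \<open>Takahashi's internal parallel reduction: a parallel step contracting no weak head redex.\<close>

inductive ipar :: "lterm \<Rightarrow> lterm \<Rightarrow> bool" where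
  ipar_Var: "ipar (Var i) (Var i)"
| ipar_Abs: "par s s' \<Longrightarrow> ipar (Abs s) (Abs s')"
| ipar_App: "ipar s s' \<Longrightarrow> par t t' \<Longrightarrow> ipar (App s t) (App s' t')"

lemma subst_wh_ipar_factor:
  assumes "ipar a a'" and "par b b'" and "\<exists>L. wh\<^sup>*\<^sup>* b L \<and> ipar L b'"
  shows "\<exists>L. wh\<^sup>*\<^sup>* (subst a b k) L \<and> ipar L (subst a' b' k)"
  using assms(1)
proof (induct rule: ipar.induct)
  case (ipar_Var i)
  then show ?case using assms(3) by (auto intro: ipar.intros)
next
  case (ipar_Abs s s')
  have "ipar (subst (Abs s) b k) (subst (Abs s') b' k)"
    using ipar_Abs assms(2) by (auto intro!: ipar.intros par_subst par_lift)
  then show ?case by blast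
next
  case (ipar_App s s' t t')
  then obtain L where L: "wh\<^sup>*\<^sup>* (subst s b k) L" "ipar L (subst s' b' k)" by blast
  have "wh\<^sup>*\<^sup>* (subst (App s t) b k) (App L (subst t b k))"
    using L(1) by (simp add: whs_App)
  moreover have "ipar (App L (subst t b k)) (subst (App s' t') b' k)"
    using L(2) ipar_App assms(2) by (auto intro: ipar.intros par_subst)
  ultimately show ?case by blast
qed

lemma par_wh_ipar_factor: "par M N \<Longrightarrow> \<exists>L. wh\<^sup>*\<^sup>* M L \<and> ipar L N"
proof (induct rule: par.induct)
  case (par_App s s' t t')
  then obtain L where "wh\<^sup>*\<^sup>* s L" "ipar L s'" by blast
  then show ?case using par_App by (auto intro!: exI[of _ "App L t"] whs_App ipar.intros)
next
  case (par_beta s s' t t')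
  then obtain L1 where L1: "wh\<^sup>*\<^sup>* s L1" "ipar L1 s'" by blast
  obtain L where L: "wh\<^sup>*\<^sup>* (subst L1 t 0) L" "ipar L (subst s' t' 0)"
    using subst_wh_ipar_factor[OF L1(2) par_beta(3,4)] by blast
  have "wh\<^sup>*\<^sup>* (App (Abs s) t) (subst s t 0)" by (auto intro: wh.intros)
  also have "wh\<^sup>*\<^sup>* (subst s t 0) (subst L1 t 0)" using L1(1) by (rule whs_subst)
  also have "wh\<^sup>*\<^sup>* (subst L1 t 0) L" by (rule L(1))
  finally show ?case using L(2) by blast
qed (auto intro: ipar.intros)

lemma ipar_wh_swap: "wh a' b' \<Longrightarrow> ipar a a' \<Longrightarrow> \<exists>b. wh a b \<and> par b b'"
proof (induct arbitrary: a rule: wh.induct)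
  case (wh_beta s' t')
  then obtain s t where "a = App (Abs s) t" "par s s'" "par t t'"
    by (auto elim!: ipar.cases)
  then show ?case by (auto intro: wh.intros par_subst)
next
  case (wh_App s' s'' t')
  then obtain s0 t0 where a: "a = App s0 t0" "ipar s0 s'" "par t0 t'"
    by (auto elim: ipar.cases)
  with wh_App(2) obtain b0 where "wh s0 b0" "par b0 s''" by blast
  then show ?case using a by (auto intro: wh.intros par.intros)
qed

lemma wh_par_confluent: "wh a b \<Longrightarrow> par a a' \<Longrightarrow> par b a' \<or> (\<exists>b'. wh a' b' \<and> par b b')"
proof (induct arbitrary: a' rule: wh.induct)
  case (wh_beta s t)
  then show ?case
    by (cases rule: par.cases) (auto elim!: par.cases[of "Abs s"] intro: wh.intros par_subst)
next
  case (wh_App s s'' t)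
  from wh_App(3) show ?case
  proof (cases rule: par.cases)
    case (par_App s1 t1)
    with wh_App(2)[OF par_App(2)] show ?thesis by (auto intro: par.intros wh.intros)
  next
    case par_beta
    then show ?thesis using wh_App(1) by (auto elim: wh.cases)
  qed
qed

section \<open>Solvability as head normalisation\<close>

inductive head_normalizing :: "lterm \<Rightarrow> bool" where
  hn_hva: "head_var_app M \<Longrightarrow> head_normalizing M"
| hn_Abs: "head_normalizing M \<Longrightarrow> head_normalizing (Abs M)"
| hn_wh: "wh M M' \<Longrightarrow> head_normalizing M' \<Longrightarrow> head_normalizing M"

lemma head_normalizing_whs: "wh\<^sup>*\<^sup>* M M' \<Longrightarrow> head_normalizing M' \<Longrightarrow> head_normalizing M"
  by (induct rule: converse_rtranclp_induct) (auto intro: hn_wh)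

lemma head_var_app_par: "head_var_app M \<Longrightarrow> par M M' \<Longrightarrow> head_var_app M'"
proof (induct arbitrary: M' rule: head_var_app.induct)
  case (2 M N)
  from 2(3) show ?case
    by (cases rule: par.cases)
      (use 2 in \<open>auto intro: head_var_app.intros elim: head_var_app.cases\<close>)
qed (auto elim: par.cases intro: head_var_app.intros)

lemma head_var_app_ipar_rev: "head_var_app M' \<Longrightarrow> ipar M M' \<Longrightarrow> head_var_app M"
proof (induct arbitrary: M rule: head_var_app.induct)
  case (2 M' N')
  from 2(3) show ?case by (cases rule: ipar.cases) (use 2 in \<open>auto intro: head_var_app.intros\<close>)
qed (auto elim: ipar.cases intro: head_var_app.intros)

lemma head_normalizing_par: "head_normalizing M \<Longrightarrow> par M M' \<Longrightarrow> head_normalizing M'"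
proof (induct arbitrary: M' rule: head_normalizing.induct)
  case (hn_hva M)
  then show ?case by (auto intro: head_normalizing.hn_hva head_var_app_par)
next
  case (hn_Abs M)
  then show ?case by (auto elim: par.cases intro: head_normalizing.hn_Abs)
next
  case (hn_wh M M1)
  from wh_par_confluent[OF hn_wh(1) hn_wh(4)] show ?case
    using hn_wh by (blast intro: head_normalizing.hn_wh)
qed

text \<open>Factorise the parallel step: its weak head steps are absorbed by rule hn_wh, and
  internal steps preserve the shape of the head.\<close>

lemma head_normalizing_par_rev: "head_normalizing M' \<Longrightarrow> par M M' \<Longrightarrow> head_normalizing M"
proof (induct arbitrary: M rule: head_normalizing.induct)
  case (hn_hva M')
  obtain L where "wh\<^sup>*\<^sup>* M L" "ipar L M'" using par_wh_ipar_factor[OF hn_hva(2)] by blast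
  then show ?case
    using hn_hva(1)
    by (auto intro: head_normalizing_whs head_normalizing.hn_hva head_var_app_ipar_rev)
next
  case (hn_Abs A')
  obtain L where L: "wh\<^sup>*\<^sup>* M L" "ipar L (Abs A')"
    using par_wh_ipar_factor[OF hn_Abs(3)] by blast
  from L(2) obtain A where "L = Abs A" "par A A'" by (auto elim: ipar.cases)
  then show ?case using hn_Abs L(1) by (auto intro: head_normalizing_whs head_normalizing.hn_Abs)
next
  case (hn_wh M' M1)
  obtain L where L: "wh\<^sup>*\<^sup>* M L" "ipar L M'" using par_wh_ipar_factor[OF hn_wh(4)] by blast
  obtain L1 where "wh L L1" "par L1 M1" using ipar_wh_swap[OF hn_wh(1) L(2)] by blast
  then show ?case using hn_wh L(1) by (auto intro: head_normalizing_whs head_normalizing.hn_wh)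
qed

lemma head_normalizing_beta_conv:
  "beta_conv M N \<Longrightarrow> head_normalizing M \<longleftrightarrow> head_normalizing N"
  unfolding beta_conv_eq
proof (induct rule: rtranclp_induct)
  case (step y z)
  then show ?case
    by (auto elim!: symclpE dest!: beta_imp_par intro: head_normalizing_par head_normalizing_par_rev)
qed simp

lemma head_normalizing_imp_hnf: "head_normalizing M \<Longrightarrow> \<exists>N. beta\<^sup>*\<^sup>* M N \<and> hnf N"
proof (induct rule: head_normalizing.induct)
  case (hn_wh M M')
  then show ?case by (meson converse_rtranclp_into_rtranclp wh_imp_beta)
qed (auto intro: hnf.intros betas_Abs)

lemma solvable_iff_head_normalizing: "solvable M \<longleftrightarrow> head_normalizing M"
proof
  assume "solvable M"
  then obtain N where "beta_conv M N" "hnf N" unfolding solvable_def by blast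
  moreover have "head_normalizing N" using \<open>hnf N\<close>
    by (induct rule: hnf.induct) (auto intro: head_normalizing.intros)
  ultimately show "head_normalizing M" using head_normalizing_beta_conv by blast
next
  assume "head_normalizing M"
  then show "solvable M"
    using head_normalizing_imp_hnf betas_imp_beta_conv unfolding solvable_def by blast
qed

lemma head_var_app_simps [simp]:
  "\<not> head_var_app (Abs s)" "head_var_app (Var i)"
  "head_var_app (App s t) \<longleftrightarrow> head_var_app s"
  by (auto elim: head_var_app.cases intro: head_var_app.intros)

lemma head_var_app_lift [simp]: "head_var_app (lift M k) \<longleftrightarrow> head_var_app M"
  by (induct M arbitrary: k) auto

lemma wh_simps [simp]: "\<not> wh (Abs s) N" "\<not> wh (Var i) N"
  by (auto elim: wh.cases)

lemma wh_App_iff: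
  "wh (App s t) N \<longleftrightarrow> (\<exists>A. s = Abs A \<and> N = subst A t 0) \<or> (\<exists>s'. wh s s' \<and> N = App s' t)"
  by (auto elim: wh.cases intro: wh.intros)

lemma head_var_app_not_wh: "head_var_app M \<Longrightarrow> \<not> wh M N"
  by (induct M arbitrary: N) (auto simp: wh_App_iff)

lemma wh_deterministic: "wh M N1 \<Longrightarrow> wh M N2 \<Longrightarrow> N1 = N2"
  by (induct M arbitrary: N1 N2) (auto simp: wh_App_iff)

lemma lterm_head_cases:
  obtains "head_var_app M" | A where "M = Abs A" | M' where "wh M M'"
  by (induct M) (auto intro: wh.intros)

lemma head_normalizing_reflect:
  fixes f :: "'p \<Rightarrow> lterm \<Rightarrow> lterm"
  assumes wh_f: "\<And>p M M'. wh M M' \<Longrightarrow> wh (f p M) (f p M')"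
    and Abs_f: "\<And>p A. f p (Abs A) = Abs (f (g p) A)"
  shows "head_normalizing (f p M) \<Longrightarrow> head_normalizing M"
proof (induct "f p M" arbitrary: p M rule: head_normalizing.induct)
  case hn_hva
  then show ?case
    by (cases M rule: lterm_head_cases)
      (auto simp: Abs_f intro: head_normalizing.hn_hva dest: wh_f head_var_app_not_wh)
next
  case (hn_Abs X)
  show ?case
  proof (cases M rule: lterm_head_cases)
    case (3 M')
    then have "wh (Abs X) (f p M')" using hn_Abs(3) wh_f by metis
    then show ?thesis by simp
  qed (use hn_Abs in \<open>auto simp: Abs_f intro: head_normalizing.intros\<close>)
next
  case (hn_wh X')
  show ?case
  proof (cases M rule: lterm_head_cases)
    case (3 M')
    then have "X' = f p M'" using hn_wh(1) wh_f wh_deterministic by blast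
    then show ?thesis using 3 hn_wh(3) by (blast intro: head_normalizing.hn_wh)
  qed (use hn_wh in \<open>auto simp: Abs_f intro: head_normalizing.intros\<close>)
qed

lemma head_normalizing_liftD: "head_normalizing (lift M k) \<Longrightarrow> head_normalizing M"
  by (rule head_normalizing_reflect[where f = "\<lambda>k M. lift M k" and g = Suc])
    (simp_all add: wh_lift)

lemma head_normalizing_substD: "head_normalizing (subst M N k) \<Longrightarrow> head_normalizing M"
  by (rule head_normalizing_reflect[where f = "\<lambda>(N, k) M. subst M N k" and p = "(N, k)"
        and g = "\<lambda>(N, k). (lift N 0, Suc k)"]) (auto simp: wh_subst)

lemma head_normalizing_AppD: "head_normalizing (App M P) \<Longrightarrow> head_normalizing M"
proof (induct "App M P" arbitrary: M rule: head_normalizing.induct)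
  case (hn_wh X')
  then show ?case
    by (auto simp: wh_App_iff intro: head_normalizing.intros dest: head_normalizing_substD)
qed (auto intro: head_normalizing.intros)

section \<open>Genericity\<close>

inductive replace_unsolvable :: "lterm \<Rightarrow> lterm \<Rightarrow> bool" where
  ru_unsolvable: "\<not> head_normalizing M \<Longrightarrow> replace_unsolvable M N"
| ru_Var: "replace_unsolvable (Var i) (Var i)"
| ru_App: "replace_unsolvable s s' \<Longrightarrow> replace_unsolvable t t' \<Longrightarrow>
    replace_unsolvable (App s t) (App s' t')"
| ru_Abs: "replace_unsolvable s s' \<Longrightarrow> replace_unsolvable (Abs s) (Abs s')"

lemma replace_unsolvable_refl: "replace_unsolvable t t"
  by (induct t) (auto intro: replace_unsolvable.intros)

lemma replace_unsolvable_lift: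
  "replace_unsolvable s s' \<Longrightarrow> replace_unsolvable (lift s k) (lift s' k)"
  by (induct arbitrary: k rule: replace_unsolvable.induct)
    (auto intro: replace_unsolvable.intros dest: head_normalizing_liftD)

lemma replace_unsolvable_subst:
  "replace_unsolvable s s' \<Longrightarrow> replace_unsolvable t t' \<Longrightarrow>
    replace_unsolvable (subst s t k) (subst s' t' k)"
proof (induct arbitrary: t t' k rule: replace_unsolvable.induct)
  case (ru_unsolvable M N)
  then show ?case by (auto intro: replace_unsolvable.ru_unsolvable dest: head_normalizing_substD)
next
  case (ru_Abs s s')
  then show ?case by (simp add: replace_unsolvable.ru_Abs replace_unsolvable_lift)
qed (auto intro: replace_unsolvable.intros)

lemma replace_unsolvable_plug:
  "replace_unsolvable M N \<Longrightarrow> replace_unsolvable (plug D M) (plug D N)"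
  by (induct D) (auto intro: replace_unsolvable.intros replace_unsolvable_refl)

lemma replace_unsolvable_head_var_app:
  "replace_unsolvable X Y \<Longrightarrow> head_var_app X \<Longrightarrow> head_var_app Y"
  by (induct rule: replace_unsolvable.induct) (auto intro: head_normalizing.hn_hva)

lemma replace_unsolvable_wh:
  "wh X X1 \<Longrightarrow> head_normalizing X \<Longrightarrow> replace_unsolvable X Y \<Longrightarrow>
    \<exists>Y1. wh Y Y1 \<and> replace_unsolvable X1 Y1"
proof (induct arbitrary: Y rule: wh.induct)
  case (wh_beta s t)
  have "head_normalizing (Abs s)" using head_normalizing_AppD wh_beta(1) by blast
  with wh_beta obtain s' t' where "Y = App (Abs s') t'"
      "replace_unsolvable s s'" "replace_unsolvable t t'"
    by (auto elim!: replace_unsolvable.cases[of "App _ _"] replace_unsolvable.cases[of "Abs _"])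
  then show ?case by (auto intro: wh.wh_beta replace_unsolvable_subst)
next
  case (wh_App s s' t)
  have "head_normalizing s" using head_normalizing_AppD wh_App(3) by blast
  with wh_App(3,4) obtain N Q
    where Y: "Y = App N Q" "replace_unsolvable s N" "replace_unsolvable t Q"
    by (auto elim: replace_unsolvable.cases)
  then obtain N1 where "wh N N1" "replace_unsolvable s' N1"
    using wh_App(2) \<open>head_normalizing s\<close> by blast
  then show ?case using Y by (auto intro: wh.wh_App replace_unsolvable.ru_App)
qed

lemma head_normalizing_replace_unsolvable:
  "head_normalizing X \<Longrightarrow> replace_unsolvable X Y \<Longrightarrow> head_normalizing Y"
proof (induct arbitrary: Y rule: head_normalizing.induct)
  case (hn_hva M)
  then show ?case using replace_unsolvable_head_var_app by (blast intro: head_normalizing.hn_hva)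
next
  case (hn_Abs M)
  from hn_Abs(3) show ?case
    by cases (use hn_Abs in \<open>auto intro: head_normalizing.intros\<close>)
next
  case (hn_wh M M')
  then obtain Y1 where "wh Y Y1" "replace_unsolvable M' Y1"
    using replace_unsolvable_wh head_normalizing.hn_wh by blast
  then show ?case using hn_wh by (auto intro: head_normalizing.hn_wh)
qed

lemma genericity: "\<not> solvable M \<Longrightarrow> solvable (plug D M) \<Longrightarrow> solvable (plug D N)"
  unfolding solvable_iff_head_normalizing
  by (blast intro: head_normalizing_replace_unsolvable replace_unsolvable_plug ru_unsolvable)

section \<open>Eta-expansion\<close>

definition eta_expand :: "lterm \<Rightarrow> lterm" where
  "eta_expand M = Abs (App (lift M 0) (Var 0))"

inductive eta_expansion :: "lterm \<Rightarrow> lterm \<Rightarrow> bool" where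
  ee_Var: "eta_expansion (Var i) (Var i)"
| ee_App: "eta_expansion s s' \<Longrightarrow> eta_expansion t t' \<Longrightarrow> eta_expansion (App s t) (App s' t')"
| ee_Abs: "eta_expansion s s' \<Longrightarrow> eta_expansion (Abs s) (Abs s')"
| ee_expand: "eta_expansion s s' \<Longrightarrow> eta_expansion s (eta_expand s')"

lemma eta_expansion_refl: "eta_expansion t t"
  by (induct t) (auto intro: eta_expansion.intros)

lemma eta_expansion_plug: "eta_expansion M N \<Longrightarrow> eta_expansion (plug D M) (plug D N)"
  by (induct D) (auto intro: eta_expansion.intros eta_expansion_refl)

lemma lift_eta_expand: "lift (eta_expand s) k = eta_expand (lift s k)"
  by (simp add: eta_expand_def lift_lift)

lemma subst_eta_expand: "subst (eta_expand s) t k = eta_expand (subst s t k)"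
  by (simp add: eta_expand_def lift_subst_lt)

lemma eta_expansion_lift: "eta_expansion s s' \<Longrightarrow> eta_expansion (lift s k) (lift s' k)"
  by (induct arbitrary: k rule: eta_expansion.induct)
    (auto intro: eta_expansion.intros simp: lift_eta_expand)

lemma eta_expansion_subst:
  "eta_expansion s s' \<Longrightarrow> eta_expansion t t' \<Longrightarrow> eta_expansion (subst s t k) (subst s' t' k)"
proof (induct arbitrary: t t' k rule: eta_expansion.induct)
  case (ee_Abs s s')
  then show ?case by (simp add: eta_expansion.ee_Abs eta_expansion_lift)
qed (auto intro: eta_expansion.intros simp: subst_eta_expand)

lemma betas_eta_expand: "beta\<^sup>*\<^sup>* s t \<Longrightarrow> beta\<^sup>*\<^sup>* (eta_expand s) (eta_expand t)"
  unfolding eta_expand_def by (intro betas_Abs betas_AppL betas_lift)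

lemma beta_eta_expand_Abs: "beta (eta_expand (Abs A)) (Abs A)"
proof -
  have "beta (App (Abs (lift A (Suc 0))) (Var 0)) (subst (lift A (Suc 0)) (Var 0) 0)"
    by (rule beta.beta_rule)
  then show ?thesis unfolding eta_expand_def by (simp add: beta.abs)
qed

lemma beta_App_eta_expand: "beta (App (eta_expand W) Q) (App W Q)"
  using beta.beta_rule[of "App (lift W 0) (Var 0)" Q] by (simp add: eta_expand_def)

lemma beta_eta_expand_eta_expand: "beta (eta_expand (eta_expand W)) (eta_expand W)"
  using beta.beta_rule[of "App (lift (lift W 0) (Suc 0)) (Var 0)" "Var 0"]
  by (simp add: eta_expand_def beta.abs)

lemma eta_expansion_AbsD:
  "eta_expansion (Abs A) Y \<Longrightarrow> \<exists>A'. beta\<^sup>*\<^sup>* Y (Abs A') \<and> eta_expansion A A'"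
proof (induct "Abs A" Y rule: eta_expansion.induct)
  case (ee_expand s')
  then obtain A' where "beta\<^sup>*\<^sup>* s' (Abs A')" "eta_expansion A A'" by blast
  moreover from this have "beta\<^sup>*\<^sup>* (eta_expand s') (Abs A')"
    using betas_eta_expand beta_eta_expand_Abs by (meson rtranclp.rtrancl_into_rtrancl)
  ultimately show ?case by blast
qed auto

lemma eta_expansion_head_var_app:
  "eta_expansion X Y \<Longrightarrow> head_var_app X \<Longrightarrow>
    \<exists>W. head_var_app W \<and> (beta\<^sup>*\<^sup>* Y W \<or> beta\<^sup>*\<^sup>* Y (eta_expand W))"
proof (induct rule: eta_expansion.induct)
  case (ee_App s s' t t')
  then obtain W where W: "head_var_app W" "beta\<^sup>*\<^sup>* s' W \<or> beta\<^sup>*\<^sup>* s' (eta_expand W)"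
    by auto
  from W(2) have "beta\<^sup>*\<^sup>* (App s' t') (App W t')"
    by (auto dest: betas_AppL[of _ _ t'] intro: rtranclp.rtrancl_into_rtrancl beta_App_eta_expand)
  then show ?case using W(1) by (intro exI[of _ "App W t'"]) simp
next
  case (ee_expand s s')
  then obtain W where W: "head_var_app W" "beta\<^sup>*\<^sup>* s' W \<or> beta\<^sup>*\<^sup>* s' (eta_expand W)" by blast
  from W(2) have "beta\<^sup>*\<^sup>* (eta_expand s') (eta_expand W)"
    by (auto dest: betas_eta_expand intro: rtranclp.rtrancl_into_rtrancl beta_eta_expand_eta_expand)
  then show ?case using W(1) by blast
qed (auto intro: head_var_app.intros)

lemma eta_expansion_wh:
  "eta_expansion X Y \<Longrightarrow> wh X X1 \<Longrightarrow> \<exists>Y1. beta\<^sup>*\<^sup>* Y Y1 \<and> eta_expansion X1 Y1"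
proof (induct arbitrary: X1 rule: eta_expansion.induct)
  case (ee_expand s s')
  then obtain Y1 where "beta\<^sup>*\<^sup>* s' Y1" "eta_expansion X1 Y1" by blast
  then show ?case by (auto intro: eta_expansion.ee_expand betas_eta_expand)
next
  case (ee_App s s' t t')
  from ee_App(5) show ?case
  proof (cases rule: wh.cases)
    case (wh_beta A)
    then obtain A' where A': "beta\<^sup>*\<^sup>* s' (Abs A')" "eta_expansion A A'"
      using eta_expansion_AbsD ee_App(1) by blast
    have "beta\<^sup>*\<^sup>* (App s' t') (App (Abs A') t')" using A'(1) by (rule betas_AppL)
    also have "beta (App (Abs A') t') (subst A' t' 0)" by (rule beta.beta_rule)
    finally show ?thesis using wh_beta A'(2) ee_App by (auto intro: eta_expansion_subst)
  next
    case (wh_App s1)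
    then obtain Y1 where "beta\<^sup>*\<^sup>* s' Y1" "eta_expansion s1 Y1" using ee_App by blast
    then show ?thesis using wh_App ee_App by (auto intro: eta_expansion.intros betas_AppL)
  qed
qed auto

lemma eta_expansion_solvable:
  "head_normalizing X \<Longrightarrow> eta_expansion X Y \<Longrightarrow> solvable Y"
proof (induct arbitrary: Y rule: head_normalizing.induct)
  case (hn_hva M)
  then obtain W where W: "head_var_app W" "beta\<^sup>*\<^sup>* Y W \<or> beta\<^sup>*\<^sup>* Y (eta_expand W)"
    using eta_expansion_head_var_app by blast
  have "hnf W" "hnf (eta_expand W)"
    using W(1) by (auto simp: eta_expand_def intro!: hnf.intros head_var_app.intros)
  then have "solvable W" "solvable (eta_expand W)"
    by (auto simp: solvable_def intro: equivp_reflp[OF equivp_beta_conv])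
  then show ?case using W(2) betas_solvable_iff by blast
next
  case (hn_Abs M)
  then obtain A' where A': "beta\<^sup>*\<^sup>* Y (Abs A')" "eta_expansion M A'"
    using eta_expansion_AbsD by blast
  then have "solvable (Abs A')"
    using hn_Abs by (simp add: solvable_iff_head_normalizing head_normalizing.hn_Abs)
  then show ?case using A'(1) betas_solvable_iff by blast
next
  case (hn_wh M M')
  then obtain Y1 where "beta\<^sup>*\<^sup>* Y Y1" "eta_expansion M' Y1" using eta_expansion_wh by blast
  then show ?case using hn_wh betas_solvable_iff by blast
qed

lemma eta_expansion_head_var_app_rev:
  "eta_expansion X Y \<Longrightarrow> head_var_app Y \<Longrightarrow> head_var_app X"
  by (induct rule: eta_expansion.induct) (auto simp: eta_expand_def)

lemma eta_expansion_wh_rev: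
  "eta_expansion X Y \<Longrightarrow> wh Y Y1 \<Longrightarrow> \<exists>X1. beta\<^sup>*\<^sup>* X X1 \<and> eta_expansion X1 Y1"
proof (induct arbitrary: Y1 rule: eta_expansion.induct)
  case (ee_App s s' t t')
  from ee_App(5) show ?case
  proof (cases rule: wh.cases)
    case (wh_beta A')
    from ee_App(1) have "eta_expansion s (Abs A')" using wh_beta by simp
    then show ?thesis
    proof (cases rule: eta_expansion.cases)
      case (ee_Abs A)
      have "beta (App s t) (subst A t 0)" using ee_Abs by (simp add: beta.beta_rule)
      moreover have "eta_expansion (subst A t 0) Y1"
        using ee_Abs wh_beta ee_App by (auto intro: eta_expansion_subst)
      ultimately show ?thesis by blast
    next
      case (ee_expand s0)
      then have "Y1 = App s0 t'" using wh_beta by (simp add: eta_expand_def)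
      then show ?thesis using ee_expand ee_App by (auto intro: eta_expansion.intros)
    qed
  next
    case (wh_App s1)
    then obtain X1 where "beta\<^sup>*\<^sup>* s X1" "eta_expansion X1 s1" using ee_App by blast
    then show ?thesis using wh_App ee_App by (auto intro: eta_expansion.intros betas_AppL)
  qed
qed (auto simp: eta_expand_def)

lemma eta_expansion_solvable_rev:
  "head_normalizing Y \<Longrightarrow> eta_expansion X Y \<Longrightarrow> solvable X"
  unfolding solvable_iff_head_normalizing
proof (induct arbitrary: X rule: head_normalizing.induct)
  case (hn_hva M)
  then show ?case using eta_expansion_head_var_app_rev head_normalizing.hn_hva by blast
next
  case (hn_Abs A')
  from hn_Abs(3) show ?case
  proof (cases rule: eta_expansion.cases)
    case (ee_Abs A)
    then show ?thesis using hn_Abs(2) head_normalizing.hn_Abs by blast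
  next
    case (ee_expand Y0)
    then have "eta_expansion (App (lift X 0) (Var 0)) A'"
      by (auto simp: eta_expand_def intro: eta_expansion.intros eta_expansion_lift)
    then have "head_normalizing (App (lift X 0) (Var 0))" by (rule hn_Abs(2))
    then show ?thesis by (blast dest: head_normalizing_AppD head_normalizing_liftD)
  qed
next
  case (hn_wh M M')
  then obtain X1 where "beta\<^sup>*\<^sup>* X X1" "eta_expansion X1 M'" using eta_expansion_wh_rev by blast
  then show ?case
    using hn_wh(3) betas_solvable_iff solvable_iff_head_normalizing by blast
qed

lemma eta_expansion_solvable_iff: "eta_expansion X Y \<Longrightarrow> solvable X \<longleftrightarrow> solvable Y"
  using eta_expansion_solvable eta_expansion_solvable_rev solvable_iff_head_normalizing by blast

definition Omega :: lterm where
  "Omega = App (Abs (App (Var 0) (Var 0))) (Abs (App (Var 0) (Var 0)))"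

lemma Omega_unsolvable: "\<not> solvable Omega"
proof -
  have "head_normalizing X \<Longrightarrow> X \<noteq> Omega" for X
    by (induct rule: head_normalizing.induct) (auto simp: Omega_def wh_App_iff)
  then show ?thesis by (auto simp: solvable_iff_head_normalizing)
qed

primrec ctx_comp :: "ctx \<Rightarrow> ctx \<Rightarrow> ctx" where
  "ctx_comp Hole D = D"
| "ctx_comp (CAppL C N) D = CAppL (ctx_comp C D) N"
| "ctx_comp (CAppR N C) D = CAppR N (ctx_comp C D)"
| "ctx_comp (CAbs C) D = CAbs (ctx_comp C D)"

lemma plug_ctx_comp [simp]: "plug (ctx_comp C D) M = plug C (plug D M)"
  by (induct C) auto

definition obs_equiv :: "lterm \<Rightarrow> lterm \<Rightarrow> bool" where
  "obs_equiv M N \<longleftrightarrow> (\<forall>D. solvable (plug D M) \<longleftrightarrow> solvable (plug D N))"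

lemma obs_equiv_plug: "obs_equiv M N \<Longrightarrow> obs_equiv (plug D M) (plug D N)"
  unfolding obs_equiv_def by (metis plug_ctx_comp)

lemma ext_lambda_theory_obs_equiv: "ext_lambda_theory obs_equiv"
  unfolding ext_lambda_theory_def lambda_theory_def
proof (intro conjI allI impI)
  show "equivp obs_equiv"
    by (rule equivpI) (auto simp: reflp_def symp_def transp_def obs_equiv_def)
next
  fix M N P
  assume "obs_equiv M N"
  then show "obs_equiv (App M P) (App N P)" "obs_equiv (App P M) (App P N)"
      "obs_equiv (Abs M) (Abs N)"
    using obs_equiv_plug[of M N "CAppL Hole P"] obs_equiv_plug[of M N "CAppR P Hole"]
      obs_equiv_plug[of M N "CAbs Hole"] by simp_all
next
  fix M N
  show "obs_equiv (App (Abs M) N) (subst M N 0)"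
    unfolding obs_equiv_def by (metis betas_solvable_iff beta_plug beta.beta_rule r_into_rtranclp)
  show "obs_equiv M (Abs (App (lift M 0) (Var 0)))"
    unfolding obs_equiv_def eta_expand_def [symmetric]
    by (metis eta_expansion_solvable_iff eta_expansion_plug eta_expansion.ee_expand
        eta_expansion_refl)
qed

definition weight :: "nat set \<Rightarrow> real" where
  "weight S = (\<Sum>n. if n \<in> S then (1/2) ^ n else 0)"

lemma summable_weight: "summable (\<lambda>n. if n \<in> S then (1/2::real) ^ n else 0)"
  by (rule summable_comparison_test'[OF summable_geometric[of "1/2::real"]]) auto

lemma weight_nonneg: "0 \<le> weight S"
  unfolding weight_def by (rule suminf_nonneg[OF summable_weight]) simp

lemma weight_mono: "S \<subseteq> T \<Longrightarrow> weight S \<le> weight T"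
  unfolding weight_def by (rule suminf_le) (auto simp: summable_weight)

lemma weight_Un_Diff: "weight (S \<union> T) = weight S + weight (T - S)"
  unfolding weight_def
  by (subst suminf_add[OF summable_weight summable_weight]) (auto intro: suminf_cong)

lemma weight_empty [simp]: "weight {} = 0"
  by (simp add: weight_def)

lemma power_le_weight: "m \<in> S \<Longrightarrow> (1/2) ^ m \<le> weight S"
  using sum_le_suminf[OF summable_weight, of "{m}" S] unfolding weight_def by simp

lemma weight_le_0_iff: "weight S \<le> 0 \<longleftrightarrow> S = {}"
proof
  assume "weight S \<le> 0"
  moreover have "(1/2::real) ^ m > 0" for m by simp
  ultimately show "S = {}"
    using power_le_weight[of _ S] by (meson ex_in_conv leD order.strict_trans2)
qed simp

lemma weight_less_power: "weight S < (1/2) ^ K \<Longrightarrow> S \<subseteq> {K<..}"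
proof
  fix m assume "weight S < (1/2) ^ K" and "m \<in> S"
  then have "(1/2::real) ^ m < (1/2) ^ K" using power_le_weight by (meson order.strict_trans1)
  then show "m \<in> {K<..}" by (simp add: power_strict_decreasing_iff)
qed

lemma weight_Diff_triangle: "weight (A - C) \<le> weight (A - B) + weight (B - C)"
proof -
  have "weight (A - C) \<le> weight ((A - B) \<union> (B - C))" by (rule weight_mono) auto
  also have "\<dots> \<le> weight (A - B) + weight (B - C)"
    using weight_Un_Diff[of "A - B" "B - C"] weight_mono[OF Diff_subset, of "B - C" "A - B"]
    by linarith
  finally show ?thesis .
qed

lemma weight_Un_triangle: "weight (X \<union> Y) + weight Z \<le> weight (X \<union> Z) + weight (Z \<union> Y)"
proof -
  define D where "D = Y - (X \<union> Z)"
  have D: "D - (X \<union> Z) = D" "D - Z = D" unfolding D_def by auto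
  have "weight (X \<union> Y) \<le> weight ((X \<union> Z) \<union> D)" by (rule weight_mono) (auto simp: D_def)
  also have "\<dots> = weight (X \<union> Z) + weight D"
    using weight_Un_Diff[of "X \<union> Z" D] by (simp only: D)
  finally have "weight (X \<union> Y) \<le> weight (X \<union> Z) + weight D" .
  moreover have "weight Z + weight D = weight (Z \<union> D)"
    using weight_Un_Diff[of Z D] by (simp only: D)
  moreover have "weight (Z \<union> D) \<le> weight (Z \<union> Y)" by (rule weight_mono) (auto simp: D_def)
  ultimately show ?thesis by linarith
qed

lemma weight_tail: "S \<subseteq> {N..} \<Longrightarrow> weight S \<le> 2 * (1/2) ^ N"
proof -
  assume S: "S \<subseteq> {N..}"
  let ?w = "\<lambda>n. if n \<in> S then (1/2::real) ^ n else 0"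
  have "weight S = (\<Sum>n. ?w (n + N)) + (\<Sum>i<N. ?w i)"
    unfolding weight_def by (rule suminf_split_initial_segment[OF summable_weight])
  also have "(\<Sum>i<N. ?w i) = 0" using S by (auto intro!: sum.neutral)
  also have "(\<Sum>n. ?w (n + N)) \<le> (\<Sum>n. (1/2) ^ N * (1/2::real) ^ n)"
    by (rule suminf_le)
      (auto simp: power_add summable_weight[THEN summable_iff_shift[THEN iffD2]]
        intro: summable_mult summable_geometric)
  also have "\<dots> = 2 * (1/2) ^ N"
    using suminf_mult[OF summable_geometric[of "1/2::real"], of "(1/2)^N"]
      suminf_geometric[of "1/2::real"] by simp
  finally show ?thesis by simp
qed

section \<open>Partial pseudo-metrics from weights of unions\<close>

definition union_weight :: "('a \<Rightarrow> nat set) \<Rightarrow> 'a \<Rightarrow> 'a \<Rightarrow> ennreal" where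
  "union_weight U x y = ennreal (weight (U x \<union> U y))"

lemma ppm_union_weight: "ppm (union_weight U)"
  unfolding ppm_def union_weight_def
  using weight_Un_triangle
  by (auto intro: ennreal_leI weight_mono simp: Un_commute weight_nonneg simp flip: ennreal_plus)

lemma ppm_le_union_weight: "ppm_le (union_weight U) x y \<longleftrightarrow> U y \<subseteq> U x"
proof -
  have "ppm_le (union_weight U) x y \<longleftrightarrow> weight (U x \<union> U y) \<le> weight (U x)"
    unfolding ppm_le_def union_weight_def by (simp add: weight_nonneg)
  also have "\<dots> \<longleftrightarrow> U y - U x = {}"
    using weight_Un_Diff[of "U x" "U y"] weight_le_0_iff by simp
  finally show ?thesis by blast
qed

lemma ppm_eq_union_weight: "ppm_eq (union_weight U) x y \<longleftrightarrow> U x = U y"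
  unfolding ppm_eq_def ppm_le_union_weight by blast

lemma ppm_ball_union_weight:
  assumes "\<epsilon> > 0"
  shows "ppm_ball (union_weight U) \<epsilon> x = {y. weight (U y - U x) < \<epsilon>}"
proof -
  have "union_weight U y x < union_weight U x x + ennreal \<epsilon> \<longleftrightarrow> weight (U y - U x) < \<epsilon>" for y
  proof -
    have "union_weight U y x = ennreal (weight (U x) + weight (U y - U x))"
      using weight_Un_Diff[of "U x" "U y"] by (simp add: union_weight_def Un_commute)
    moreover have "union_weight U x x + ennreal \<epsilon> = ennreal (weight (U x) + \<epsilon>)"
      using assms by (simp add: union_weight_def weight_nonneg ennreal_plus)
    ultimately show ?thesis by (simp only: ennreal_less_iff weight_nonneg add_nonneg_nonneg) simp
  qed
  then show ?thesis unfolding ppm_ball_def by blast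
qed

lemma ppm_continuousI:
  assumes "\<And>x \<epsilon> y. \<epsilon> > 0 \<Longrightarrow> f y \<in> ppm_ball p \<epsilon> x \<Longrightarrow>
    \<exists>\<delta>>0. y \<in> ppm_ball p \<delta> y \<and> ppm_ball p \<delta> y \<subseteq> f -` ppm_ball p \<epsilon> x"
  shows "ppm_continuous p f"
  unfolding ppm_continuous_def
proof (intro allI impI)
  fix V assume "ppm_open p V"
  then obtain F where F: "\<forall>B\<in>F. \<exists>x \<epsilon>. \<epsilon> > 0 \<and> B = ppm_ball p \<epsilon> x" "V = \<Union>F"
    unfolding ppm_open_def by blast
  let ?G = "{B. \<exists>y \<delta>. \<delta> > 0 \<and> B = ppm_ball p \<delta> y \<and> B \<subseteq> f -` V}"
  have "f -` V \<subseteq> \<Union>?G"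
  proof
    fix y assume "y \<in> f -` V"
    then obtain B where "B \<in> F" "f y \<in> B" using F(2) by blast
    then obtain x \<epsilon> where "\<epsilon> > 0" "B = ppm_ball p \<epsilon> x" using F(1) by blast
    then obtain \<delta> where "\<delta> > 0" "y \<in> ppm_ball p \<delta> y" "ppm_ball p \<delta> y \<subseteq> f -` B"
      using assms[of \<epsilon> y x] \<open>f y \<in> B\<close> by auto
    moreover have "f -` B \<subseteq> f -` V" using \<open>B \<in> F\<close> F(2) by blast
    ultimately have "ppm_ball p \<delta> y \<in> ?G" by blast
    then show "y \<in> \<Union>?G" using \<open>y \<in> ppm_ball p \<delta> y\<close> by blast
  qed
  then have "f -` V = \<Union>?G" by blast
  then show "ppm_open p (f -` V)" unfolding ppm_open_def by (intro exI[of _ ?G]) blast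
qed

text \<open>A ball of radius (1/2)^K around y only contains points w such that U w - U y has no
  element up to K; choosing K above the reindexing of 0, ..., N-1 makes U (f w) - U (f y)
  a tail beyond N, of weight at most 2 (1/2)^N.\<close>

lemma ppm_continuous_union_weight:
  assumes reindex: "\<And>w n. n \<in> U (f w) \<longleftrightarrow> \<sigma> n \<in> U w"
  shows "ppm_continuous (union_weight U) f"
proof (rule ppm_continuousI)
  fix x y and \<epsilon> :: real
  assume "\<epsilon> > 0" and "f y \<in> ppm_ball (union_weight U) \<epsilon> x"
  then have y: "weight (U (f y) - U x) < \<epsilon>" by (simp add: ppm_ball_union_weight)
  obtain N where "(1/2::real) ^ N < (\<epsilon> - weight (U (f y) - U x)) / 2"
    using real_arch_pow_inv[of "(\<epsilon> - weight (U (f y) - U x)) / 2" "1/2"] y by auto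
  then have N: "2 * (1/2::real) ^ N < \<epsilon> - weight (U (f y) - U x)" by (simp add: field_simps)
  define K where "K = Max (\<sigma> ` {..<N})"
  have \<sigma>_le_K: "n < N \<Longrightarrow> \<sigma> n \<le> K" for n unfolding K_def by simp
  show "\<exists>\<delta>>0. y \<in> ppm_ball (union_weight U) \<delta> y \<and>
      ppm_ball (union_weight U) \<delta> y \<subseteq> f -` ppm_ball (union_weight U) \<epsilon> x"
  proof (intro exI conjI subsetI)
    show "(1/2::real) ^ K > 0" by simp
    then show "y \<in> ppm_ball (union_weight U) ((1/2) ^ K) y" by (simp add: ppm_ball_union_weight)
    fix w assume "w \<in> ppm_ball (union_weight U) ((1/2) ^ K) y"
    then have "U w - U y \<subseteq> {K<..}" by (simp add: ppm_ball_union_weight weight_less_power)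
    have "U (f w) - U (f y) \<subseteq> {N..}"
    proof
      fix n assume "n \<in> U (f w) - U (f y)"
      then have "\<sigma> n \<in> U w - U y" by (simp add: reindex)
      then show "n \<in> {N..}"
        using \<open>U w - U y \<subseteq> {K<..}\<close> \<sigma>_le_K by (meson atLeast_iff greaterThan_iff not_le subsetD)
    qed
    then have "weight (U (f w) - U (f y)) < \<epsilon> - weight (U (f y) - U x)"
      using weight_tail N by (meson order.strict_trans1)
    then have "weight (U (f w) - U x) < \<epsilon>"
      using weight_Diff_triangle[of "U (f w)" "U x" "U (f y)"] by linarith
    then show "w \<in> f -` ppm_ball (union_weight U) \<epsilon> x"
      using \<open>\<epsilon> > 0\<close> by (simp add: ppm_ball_union_weight)
  qed
qed

definition unsolvable_ctxs :: "(nat \<Rightarrow> ctx) \<Rightarrow> lterm \<Rightarrow> nat set" where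
  "unsolvable_ctxs C M = {n. \<not> solvable (plug (C n) M)}"

lemma p_ctx_eq_union_weight: "p_ctx C = union_weight (unsolvable_ctxs C)"
proof (intro ext)
  fix M N
  define S where "S = unsolvable_ctxs C M \<union> unsolvable_ctxs C N"
  have "p_ctx C M N = (\<Sum>n. ennreal (if n \<in> S then (1/2) ^ n else 0))"
    unfolding p_ctx_def
    by (intro suminf_cong) (auto simp: S_def unsolvable_ctxs_def power_one_over)
  also have "\<dots> = ennreal (weight S)"
    unfolding weight_def by (rule suminf_ennreal2) (simp_all add: summable_weight)
  finally show "p_ctx C M N = union_weight (unsolvable_ctxs C) M N"
    by (simp add: S_def union_weight_def)
qed

lemma unsolvable_ctxs_eq_iff:
  assumes "surj C"
  shows "unsolvable_ctxs C M = unsolvable_ctxs C N \<longleftrightarrow> obs_equiv M N"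
proof
  assume eq: "unsolvable_ctxs C M = unsolvable_ctxs C N"
  show "obs_equiv M N" unfolding obs_equiv_def
  proof
    fix D
    obtain n where "D = C n" using assms by (metis surjD)
    then show "solvable (plug D M) \<longleftrightarrow> solvable (plug D N)"
      using eq by (auto simp: unsolvable_ctxs_def set_eq_iff)
  qed
qed (auto simp: obs_equiv_def unsolvable_ctxs_def)

lemma ppm_eq_p_ctx: "surj C \<Longrightarrow> ppm_eq (p_ctx C) = obs_equiv"
  by (simp add: fun_eq_iff p_ctx_eq_union_weight ppm_eq_union_weight unsolvable_ctxs_eq_iff)

lemma ppm_continuous_p_ctx_plug: "surj C \<Longrightarrow> ppm_continuous (p_ctx C) (plug D)"
  unfolding p_ctx_eq_union_weight
  by (rule ppm_continuous_union_weight[where \<sigma> = "\<lambda>n. inv C (ctx_comp (C n) D)"])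
    (simp add: unsolvable_ctxs_def surj_f_inv_f)

lemma generic_p_ctx_iff: "surj C \<Longrightarrow> generic (p_ctx C) M \<longleftrightarrow> \<not> solvable M"
proof
  assume "surj C"
  then obtain n where "C n = Hole" by (metis surjD)
  then have "n \<in> unsolvable_ctxs C Omega" by (simp add: unsolvable_ctxs_def Omega_unsolvable)
  moreover assume "generic (p_ctx C) M"
  then have "unsolvable_ctxs C Omega \<subseteq> unsolvable_ctxs C M"
    unfolding generic_def p_ctx_eq_union_weight ppm_le_union_weight by blast
  ultimately have "n \<in> unsolvable_ctxs C M" by blast
  then show "\<not> solvable M" using \<open>C n = Hole\<close> by (simp add: unsolvable_ctxs_def)
next
  assume "\<not> solvable M"
  then show "generic (p_ctx C) M"
    unfolding generic_def p_ctx_eq_union_weight ppm_le_union_weight unsolvable_ctxs_def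
    using genericity by blast
qed

theorem mainTheorem2:
  fixes C :: "nat \<Rightarrow> ctx"
  assumes "bij C"
  shows "sensible (p_ctx C) \<and> ext_lambda_ppm (p_ctx C)"
proof -
  have surj: "surj C" using assms by (rule bij_is_surj)
  have ppm: "ppm (p_ctx C)"
    unfolding p_ctx_eq_union_weight by (rule ppm_union_weight)
  have ext_theory: "ext_lambda_theory (ppm_eq (p_ctx C))"
    using ppm_eq_p_ctx[OF surj] ext_lambda_theory_obs_equiv by simp
  have cont: "\<forall>D. ppm_continuous (p_ctx C) (plug D)"
    using ppm_continuous_p_ctx_plug[OF surj] by blast
  show ?thesis
    using ppm ext_theory cont generic_p_ctx_iff[OF surj]
    unfolding sensible_def lambda_ppm_def ext_lambda_ppm_def ext_lambda_theory_def by blast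
qed

end
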